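(* Let $2\le k\le d$, let $P\subset\mathbb{R}^d$ be finite with properties $a_1,\dots,a_k\colon P\to\{-1,1\}$, and for $i=2,\dots,k$ let $H_i$ be a hyperplane strictly separating $P^i_-$ from $P^i_+$, with normal $v_i$, where $v_2,\dots,v_k$ are linearly independent. Assume that any at most $d+1$ points of $P$ are affinely independent and that the orthogonal projections onto $\mathrm{span}(v_2,\dots,v_k)$ of any at most $k$ points of $P$ are affinely independent. If there exists an orthonormal system $w_1,\dots,w_r$ (any $r\ge 0$) of vectors orthogonal to all of $v_2,\dots,v_k$ such that $P'_-$ and $P'_+$ are not $(1,\infty)$-separable, where $p'=p-\sum_{j=1}^r(p\cdot w_j)w_j$, then such a system exists with $r\le\min(k,\,d-k+1)$.
   Context: $P^i_{\pm}=\{p\in P: a_i(p)=\pm1\}$, $P_\pm=P^1_\pm$, and $X'$ denotes the image of $X$ under the stated projection. Finite sets $X,Y$ are $(1,\infty)$-separable if $\mathrm{CH}(X)\cap Y=\emptyset$ or $X\cap\mathrm{CH}(Y)=\emptyset$, where $\mathrm{CH}$ denotes the convex hull. *)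

theory Defs
  imports "HOL-Analysis.Analysis"
begin

definition orth_proj :: "'a::euclidean_space set \<Rightarrow> 'a \<Rightarrow> 'a" where
  "orth_proj V x = (THE y. y \<in> V \<and> (\<forall>z\<in>V. inner (x - y) z = 0))"

definition sep_1_inf :: "'a::euclidean_space set \<Rightarrow> 'a set \<Rightarrow> bool" where
  "sep_1_inf X Y \<longleftrightarrow> convex hull X \<inter> Y = {} \<or> X \<inter> convex hull Y = {}"

definition strictly_separates :: "'a::euclidean_space \<Rightarrow> real \<Rightarrow> 'a set \<Rightarrow> 'a set \<Rightarrow> bool" where
  "strictly_separates v b A B \<longleftrightarrow>
     ((\<forall>x\<in>A. inner v x < b) \<and> (\<forall>x\<in>B. inner v x > b)) \<or>
     ((\<forall>x\<in>A. inner v x > b) \<and> (\<forall>x\<in>B. inner v x < b))"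

definition Pcls :: "'a set \<Rightarrow> (nat \<Rightarrow> 'a \<Rightarrow> int) \<Rightarrow> nat \<Rightarrow> int \<Rightarrow> 'a set" where
  "Pcls P a i s = {p \<in> P. a i p = s}"

definition good_system :: "nat \<Rightarrow> (nat \<Rightarrow> 'a::euclidean_space) \<Rightarrow> nat \<Rightarrow> (nat \<Rightarrow> 'a) \<Rightarrow> bool" where
  "good_system k v r w \<longleftrightarrow>
     (\<forall>j\<in>{1..r}. norm (w j) = 1) \<and>
     (\<forall>i\<in>{1..r}. \<forall>j\<in>{1..r}. i \<noteq> j \<longrightarrow> inner (w i) (w j) = 0) \<and>
     (\<forall>j\<in>{1..r}. \<forall>i\<in>{2..k}. inner (w j) (v i) = 0)"

definition proj_off :: "nat \<Rightarrow> (nat \<Rightarrow> 'a::euclidean_space) \<Rightarrow> 'a \<Rightarrow> 'a" where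
  "proj_off r w p = p - (\<Sum>j=1..r. inner p (w j) *\<^sub>R w j)"

end

theory Submission
  imports Defs
begin

text \<open>Non-separability of the projected classes is witnessed by two difference vectors
  \<open>y - c\<close> (with \<open>y\<close> a point of one class, \<open>c\<close> in the convex hull of the other) and
  \<open>x - c'\<close> that are killed by the projection. Both are orthogonal to every \<open>v\<^sub>i\<close>, so an
  orthonormal basis of their span is an admissible system of at most two vectors; the
  corresponding projection still kills both witnesses. Two vectors orthogonal to the
  \<open>k - 1\<close> independent \<open>v\<^sub>i\<close> span a space of dimension at most \<open>d - k + 1\<close>, which gives the bound.\<close>

lemma linear_proj_off: "linear (proj_off r w)"
  unfolding proj_off_def
  by (rule linearI)
     (auto simp: inner_add_left scaleR_add_left sum.distrib scaleR_sum_right algebra_simps)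

lemma proj_off_orthogonal:
  assumes "\<forall>j\<in>{1..r}. norm (w j) = 1"
    and "\<forall>i\<in>{1..r}. \<forall>j\<in>{1..r}. i \<noteq> j \<longrightarrow> inner (w i) (w j) = 0"
    and "i \<in> {1..r}"
  shows "inner (proj_off r w p) (w i) = 0"
proof -
  have "inner (\<Sum>j=1..r. inner p (w j) *\<^sub>R w j) (w i)
        = (\<Sum>j=1..r. if j = i then inner p (w i) else 0)"
    unfolding inner_sum_left
  proof (rule sum.cong)
    fix j assume "j \<in> {1..r}"
    then show "inner (inner p (w j) *\<^sub>R w j) (w i) = (if j = i then inner p (w i) else 0)"
      using assms by (auto simp: inner_commute dot_square_norm)
  qed simp
  also have "\<dots> = inner p (w i)" using assms(3) by simp
  finally show ?thesis unfolding proj_off_def by (simp add: inner_diff_left)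
qed

lemma proj_off_eq_0_on_span:
  assumes "\<forall>j\<in>{1..r}. norm (w j) = 1"
    and "\<forall>i\<in>{1..r}. \<forall>j\<in>{1..r}. i \<noteq> j \<longrightarrow> inner (w i) (w j) = 0"
    and "z \<in> span (w ` {1..r})"
  shows "proj_off r w z = 0"
proof -
  let ?d = "proj_off r w z"
  have "?d \<in> span (w ` {1..r})"
    unfolding proj_off_def
    by (intro span_diff assms(3) span_sum span_scale span_base) auto
  moreover have "\<And>y. y \<in> w ` {1..r} \<Longrightarrow> orthogonal ?d y"
    using proj_off_orthogonal[OF assms(1,2)] by (auto simp: orthogonal_def)
  ultimately have "orthogonal ?d ?d" by (rule orthogonal_to_span)
  then show ?thesis by (simp add: orthogonal_def)
qed

lemma proj_off_eq_0_imp_orthogonal: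
  assumes "\<forall>j\<in>{1..r}. inner (w j) z = 0" and "proj_off r w u = 0"
  shows "inner u z = 0"
proof -
  have "u = (\<Sum>j=1..r. inner u (w j) *\<^sub>R w j)"
    using assms(2) by (simp add: proj_off_def)
  then have "inner u z = (\<Sum>j=1..r. inner u (w j) * inner (w j) z)"
    by (metis (no_types, lifting) inner_scaleR_left inner_sum_left sum.cong)
  also have "\<dots> = 0" using assms(1) by simp
  finally show ?thesis .
qed

lemma dim_add_le_DIM_if_orthogonal:
  fixes A B :: "'a::euclidean_space set"
  assumes "\<And>x y. x \<in> A \<Longrightarrow> y \<in> B \<Longrightarrow> inner x y = 0"
  shows "dim A + dim B \<le> DIM('a)"
  using dim_orthogonal_sum[OF assms] dim_subset_UNIV[of "A \<union> B"] by simp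

lemma good_system_spanning:
  fixes A :: "'a::euclidean_space set"
  assumes "\<forall>u\<in>A. \<forall>i\<in>{2..k}. inner u (v i) = 0"
  obtains m w where "good_system k v m w" "m = dim A" "span (w ` {1..m}) = span A"
proof -
  obtain B where B: "B \<subseteq> span A" "pairwise orthogonal B" "\<And>z. z \<in> B \<Longrightarrow> norm z = 1"
    "independent B" "card B = dim (span A)" "span B = span A"
    using orthonormal_basis_subspace[of "span A"] by auto
  define m where "m = card B"
  obtain w where "bij_betw w {1..m} B"
    using ex_bij_betw_nat_finite_1[OF finiteI_independent[OF B(4)]] unfolding m_def by blast
  then have w_img: "w ` {1..m} = B" and w_inj: "inj_on w {1..m}"
    by (simp_all add: bij_betw_def)
  have "inner (w j) (v i) = 0" if "j \<in> {1..m}" "i \<in> {2..k}" for i j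
  proof -
    have "w j \<in> span A" using that w_img B(1) by auto
    moreover have "\<And>q. q \<in> A \<Longrightarrow> orthogonal (v i) q"
      using assms that by (auto simp: orthogonal_def inner_commute)
    ultimately have "orthogonal (v i) (w j)" by (rule orthogonal_to_span)
    then show ?thesis by (simp add: orthogonal_def inner_commute)
  qed
  moreover have "inner (w i) (w j) = 0" if "i \<in> {1..m}" "j \<in> {1..m}" "i \<noteq> j" for i j
  proof -
    have "w i \<noteq> w j" using that w_inj by (auto dest: inj_onD)
    moreover have "w i \<in> B" "w j \<in> B" using that w_img by auto
    ultimately show ?thesis using B(2) by (auto simp: pairwise_def orthogonal_def)
  qed
  ultimately have "good_system k v m w"
    using B(3) w_img unfolding good_system_def by auto
  moreover have "m = dim A" using B(5) by (simp add: m_def)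
  ultimately show thesis using that w_img B(6) by blast
qed

lemma not_sep_1_inf_linear_image_iff:
  assumes "linear f"
  shows "\<not> sep_1_inf (f ` X) (f ` Y) \<longleftrightarrow>
    (\<exists>y\<in>Y. \<exists>c\<in>convex hull X. f (y - c) = 0) \<and> (\<exists>x\<in>X. \<exists>c\<in>convex hull Y. f (x - c) = 0)"
  unfolding sep_1_inf_def convex_hull_linear_image[OF assms, symmetric] linear_diff[OF assms]
  by (auto simp: disjoint_iff) (metis image_eqI)+

theorem mainTheorem9:
  fixes P :: "'a::euclidean_space set"
    and k :: nat
    and a :: "nat \<Rightarrow> 'a \<Rightarrow> int"
    and v :: "nat \<Rightarrow> 'a"
    and b :: "nat \<Rightarrow> real"
  assumes "2 \<le> k" and "k \<le> DIM('a)"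
    and "finite P"
    and "\<forall>i\<in>{1..k}. \<forall>p\<in>P. a i p = -1 \<or> a i p = 1"
    and "\<forall>i\<in>{2..k}. strictly_separates (v i) (b i) (Pcls P a i (-1)) (Pcls P a i 1)"
    and "inj_on v {2..k}" and "independent (v ` {2..k})"
    and "\<forall>S\<subseteq>P. card S \<le> DIM('a) + 1 \<longrightarrow> \<not> affine_dependent S"
    and "\<forall>S\<subseteq>P. card S \<le> k \<longrightarrow>
           inj_on (orth_proj (span (v ` {2..k}))) S \<and>
           \<not> affine_dependent (orth_proj (span (v ` {2..k})) ` S)"
    and "\<exists>r w. good_system k v r w \<and>
           \<not> sep_1_inf (proj_off r w ` Pcls P a 1 (-1)) (proj_off r w ` Pcls P a 1 1)"
  shows "\<exists>r w. good_system k v r w \<and> r \<le> min k (DIM('a) - k + 1) \<and>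
           \<not> sep_1_inf (proj_off r w ` Pcls P a 1 (-1)) (proj_off r w ` Pcls P a 1 1)"
proof -
  let ?X = "Pcls P a 1 (-1)" and ?Y = "Pcls P a 1 1"
  obtain r0 w0 where g0: "good_system k v r0 w0"
    and "\<not> sep_1_inf (proj_off r0 w0 ` ?X) (proj_off r0 w0 ` ?Y)"
    using assms(10) by blast
  then obtain y c1 x c2 where wit: "y \<in> ?Y" "c1 \<in> convex hull ?X" "x \<in> ?X" "c2 \<in> convex hull ?Y"
    and ker: "proj_off r0 w0 (y - c1) = 0" "proj_off r0 w0 (x - c2) = 0"
    unfolding not_sep_1_inf_linear_image_iff[OF linear_proj_off] by blast
  define A where "A = {y - c1, x - c2}"
  have orth: "\<forall>u\<in>A. \<forall>i\<in>{2..k}. inner u (v i) = 0"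
    using g0 ker proj_off_eq_0_imp_orthogonal[of r0 w0]
    unfolding A_def good_system_def by auto
  obtain m w where g: "good_system k v m w" and m: "m = dim A"
    and span_w: "span (w ` {1..m}) = span A"
    using good_system_spanning[OF orth] by blast
  have "dim A \<le> 2"
  proof -
    have "card A \<le> 2" by (simp add: A_def card_insert_if)
    then show ?thesis using dim_le_card[of A A] by (simp add: A_def span_superset)
  qed
  moreover have "dim A + (k - 1) \<le> DIM('a)"
    using dim_add_le_DIM_if_orthogonal[of A "v ` {2..k}"] orth
      dim_eq_card_independent[OF assms(7)] card_image[OF assms(6)] by auto
  ultimately have "m \<le> min k (DIM('a) - k + 1)" using m assms(1) by simp
  moreover have "proj_off m w u = 0" if "u \<in> A" for u
    using proj_off_eq_0_on_span[of m w u] g that span_w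
    unfolding good_system_def by (simp add: span_base)
  then have "\<not> sep_1_inf (proj_off m w ` ?X) (proj_off m w ` ?Y)"
    unfolding not_sep_1_inf_linear_image_iff[OF linear_proj_off] using wit A_def by blast
  ultimately show ?thesis using g by blast
qed

end
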